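(* Let $G=(V,E,c_V,c_E)$ be a capacitated graph such that, in the execution of Rising-Tide on $G$, no two vertices become saturated simultaneously, and let $\mu$ be the output of Rising-Tide on $G$ and $D_G$ its dependency graph. Then: (1) for any two edges $e_1,e_2\in E$, if $e_1$ is removed from the working set $E'$ before $e_2$, then $\mu(e_1)<\mu(e_2)$; (2) for each $u\in V$, all edges directed towards $u$ in $D_G$ have the same $\mu$-value; (3) for any edge $u\to v$ of $D_G$ and any edge $(v,w)\in E$, $\mu(u,v)\ge\mu(v,w)$; (4) for any walk $u_0\to u_1\to u_2\to\cdots$ in $D_G$, $\mu(u_0,u_1)\ge\mu(u_1,u_2)\ge\cdots$; (5) $D_G$ is a directed acyclic graph.
   Context: Capacitated graphs have nonnegative vertex capacities $c_V$ and edge capacities $c_E$; edges may include self-loops, and in $\sum_j\mu(i,j)$ a self-loop at $i$ counts once. A feasible fractional matching $\mu:E\to\mathbb{R}_{\ge0}$ satisfies $\mu(e)\le c_E(e)$ and $\sum_j\mu(i,j)\le c_V(i)$. Vertex $i$ is saturated if $\sum_j\mu(i,j)=c_V(i)$; edge $e$ is saturated if $\mu(e)=c_E(e)$. Rising-Tide: set $E'=\{e\in E:c_E(e)>0\}$ and $\mu\equiv0$; while $E'\ne\emptyset$: choose the maximum $\delta\ge0$ such that $\mu+\delta\mathbf{1}_{E'}$ is feasible, set $\mu\gets\mu+\delta\mathbf{1}_{E'}$, and remove from $E'$ every edge $(i,j)$ such that $i$, $j$, or $(i,j)$ is saturated; return $\mu$. Dependency graph $D_G$: the directed graph on vertex set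 $V$ which, for each edge $(i,j)\in E$, contains the directed edge $j\to i$ if $i$ is saturated at the moment $(i,j)$ is removed from $E'$, and contains $i\to j$ if $j$ is saturated at that moment (possibly both). *)

theory Defs
  imports Complex_Main
begin

text \<open>An (undirected) edge (i,j)
  is represented by the set {i,j}; a self-loop (i,i) is the singleton {i}.\<close>

definition is_cgraph :: "'v set \<Rightarrow> 'v set set \<Rightarrow> ('v \<Rightarrow> real) \<Rightarrow> ('v set \<Rightarrow> real) \<Rightarrow> bool" where
  "is_cgraph V E cV cE \<longleftrightarrow> finite V \<and>
     (\<forall>e\<in>E. e \<subseteq> V \<and> (card e = 1 \<or> card e = 2)) \<and>
     (\<forall>i\<in>V. 0 \<le> cV i) \<and> (\<forall>e\<in>E. 0 \<le> cE e)"

text \<open>sum_j mu(i,j): each edge containing i counted once (so a self-loop counts once).\<close>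
definition vload :: "'v set set \<Rightarrow> ('v set \<Rightarrow> real) \<Rightarrow> 'v \<Rightarrow> real" where
  "vload E \<mu> i = (\<Sum>e\<in>{e\<in>E. i \<in> e}. \<mu> e)"

definition feasible :: "'v set \<Rightarrow> 'v set set \<Rightarrow> ('v \<Rightarrow> real) \<Rightarrow> ('v set \<Rightarrow> real) \<Rightarrow> ('v set \<Rightarrow> real) \<Rightarrow> bool" where
  "feasible V E cV cE \<mu> \<longleftrightarrow> (\<forall>e\<in>E. 0 \<le> \<mu> e \<and> \<mu> e \<le> cE e) \<and> (\<forall>i\<in>V. vload E \<mu> i \<le> cV i)"

definition vsat :: "'v set set \<Rightarrow> ('v \<Rightarrow> real) \<Rightarrow> ('v set \<Rightarrow> real) \<Rightarrow> 'v \<Rightarrow> bool" where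
  "vsat E cV \<mu> i \<longleftrightarrow> vload E \<mu> i = cV i"

definition esat :: "('v set \<Rightarrow> real) \<Rightarrow> ('v set \<Rightarrow> real) \<Rightarrow> 'v set \<Rightarrow> bool" where
  "esat cE \<mu> e \<longleftrightarrow> \<mu> e = cE e"

definition raise :: "('v set \<Rightarrow> real) \<Rightarrow> 'v set set \<Rightarrow> real \<Rightarrow> ('v set \<Rightarrow> real)" where
  "raise \<mu> E' \<delta> = (\<lambda>e. \<mu> e + (if e \<in> E' then \<delta> else 0))"

definition rt_delta :: "'v set \<Rightarrow> 'v set set \<Rightarrow> ('v \<Rightarrow> real) \<Rightarrow> ('v set \<Rightarrow> real) \<Rightarrow> 'v set set \<Rightarrow> ('v set \<Rightarrow> real) \<Rightarrow> real" where
  "rt_delta V E cV cE E' \<mu> = (GREATEST \<delta>. 0 \<le> \<delta> \<and> feasible V E cV cE (raise \<mu> E' \<delta>))"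

definition rt_step :: "'v set \<Rightarrow> 'v set set \<Rightarrow> ('v \<Rightarrow> real) \<Rightarrow> ('v set \<Rightarrow> real) \<Rightarrow>
    'v set set \<times> ('v set \<Rightarrow> real) \<Rightarrow> 'v set set \<times> ('v set \<Rightarrow> real)" where
  "rt_step V E cV cE s = (case s of (E', \<mu>) \<Rightarrow>
     if E' = {} then s else
       (let \<mu>' = raise \<mu> E' (rt_delta V E cV cE E' \<mu>) in
        ({e \<in> E'. \<not> (\<exists>i\<in>e. vsat E cV \<mu>' i) \<and> \<not> esat cE \<mu>' e}, \<mu>')))"

definition rt_state :: "'v set \<Rightarrow> 'v set set \<Rightarrow> ('v \<Rightarrow> real) \<Rightarrow> ('v set \<Rightarrow> real) \<Rightarrow> nat \<Rightarrow>
    'v set set \<times> ('v set \<Rightarrow> real)" where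
  "rt_state V E cV cE k = (rt_step V E cV cE ^^ k) ({e\<in>E. 0 < cE e}, (\<lambda>_. 0))"

definition rt_mu :: "'v set \<Rightarrow> 'v set set \<Rightarrow> ('v \<Rightarrow> real) \<Rightarrow> ('v set \<Rightarrow> real) \<Rightarrow> nat \<Rightarrow> 'v set \<Rightarrow> real" where
  "rt_mu V E cV cE k = snd (rt_state V E cV cE k)"

definition rt_work :: "'v set \<Rightarrow> 'v set set \<Rightarrow> ('v \<Rightarrow> real) \<Rightarrow> ('v set \<Rightarrow> real) \<Rightarrow> nat \<Rightarrow> 'v set set" where
  "rt_work V E cV cE k = fst (rt_state V E cV cE k)"

definition rising_tide :: "'v set \<Rightarrow> 'v set set \<Rightarrow> ('v \<Rightarrow> real) \<Rightarrow> ('v set \<Rightarrow> real) \<Rightarrow> 'v set \<Rightarrow> real" where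
  "rising_tide V E cV cE = rt_mu V E cV cE (LEAST k. rt_work V E cV cE k = {})"

definition removed_at :: "'v set \<Rightarrow> 'v set set \<Rightarrow> ('v \<Rightarrow> real) \<Rightarrow> ('v set \<Rightarrow> real) \<Rightarrow> 'v set \<Rightarrow> nat \<Rightarrow> bool" where
  "removed_at V E cV cE e k \<longleftrightarrow> e \<in> rt_work V E cV cE k \<and> e \<notin> rt_work V E cV cE (Suc k)"

text \<open>Dependency graph: for an edge (i,j) removed in iteration k, j -> i if i is saturated
  at that moment (i.e. w.r.t. mu after the increase of iteration k).\<close>
definition dep_graph :: "'v set \<Rightarrow> 'v set set \<Rightarrow> ('v \<Rightarrow> real) \<Rightarrow> ('v set \<Rightarrow> real) \<Rightarrow> ('v \<times> 'v) set" where
  "dep_graph V E cV cE = {(j, i). i \<in> V \<and> j \<in> V \<and> {i, j} \<in> E \<and>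
      (\<exists>k. removed_at V E cV cE {i, j} k \<and> vsat E cV (rt_mu V E cV cE (Suc k)) i)}"

text \<open>Vertex i becomes saturated at time t: t = 0 means saturated by the initial mu = 0;
  t = k+1 means it became saturated during iteration k.\<close>
definition becomes_sat :: "'v set \<Rightarrow> 'v set set \<Rightarrow> ('v \<Rightarrow> real) \<Rightarrow> ('v set \<Rightarrow> real) \<Rightarrow> 'v \<Rightarrow> nat \<Rightarrow> bool" where
  "becomes_sat V E cV cE i t \<longleftrightarrow> vsat E cV (rt_mu V E cV cE t) i \<and>
      (t = 0 \<or> \<not> vsat E cV (rt_mu V E cV cE (t - 1)) i)"

definition no_simultaneous_saturation :: "'v set \<Rightarrow> 'v set set \<Rightarrow> ('v \<Rightarrow> real) \<Rightarrow> ('v set \<Rightarrow> real) \<Rightarrow> bool" where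
  "no_simultaneous_saturation V E cV cE \<longleftrightarrow>
     (\<forall>t. \<forall>i\<in>V. \<forall>j\<in>V. becomes_sat V E cV cE i t \<and> becomes_sat V E cV cE j t \<longrightarrow> i = j)"

end

theory Submission
  imports Defs
begin

(* The edges still in the working set have been raised together since the start, so they
   carry the common maximal value of the current matching. After the first round all
   working edges and their endpoints are unsaturated, so every later step is strictly
   positive; hence an edge removed later ends up strictly higher.
   An edge u -> v of the dependency graph is removed in the round in which v saturates; in
   that round every edge at v leaves the working set, none of them with a larger value.
   Finally, along u -> v with u \<noteq> v the vertex u saturates strictly after v: were u
   saturated before the removal round, that round would have to be the first one, and its
   step would be zero, so v would have been saturated from the start. Saturation times thus
   decrease strictly along the dependency graph without loops, which is therefore acyclic. *)

definition working_degree :: "'v set set \<Rightarrow> 'v set set \<Rightarrow> 'v \<Rightarrow> nat" where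
  "working_degree E W i = card {e\<in>E. i \<in> e \<and> e \<in> W}"

definition step_bounds :: "'v set \<Rightarrow> 'v set set \<Rightarrow> ('v \<Rightarrow> real) \<Rightarrow> ('v set \<Rightarrow> real) \<Rightarrow>
    'v set set \<Rightarrow> ('v set \<Rightarrow> real) \<Rightarrow> real set" where
  "step_bounds V E cV cE W \<mu> =
     (\<lambda>e. cE e - \<mu> e) ` W \<union>
     (\<lambda>i. (cV i - vload E \<mu> i) / working_degree E W i) ` {i\<in>V. 0 < working_degree E W i}"

lemma vload_raise:
  assumes "finite E"
  shows "vload E (raise \<mu> W \<delta>) i = vload E \<mu> i + \<delta> * working_degree E W i"
proof -
  have "vload E (raise \<mu> W \<delta>) i = vload E \<mu> i + (\<Sum>e\<in>{e\<in>E. i \<in> e}. if e \<in> W then \<delta> else 0)"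
    unfolding vload_def raise_def by (simp add: sum.distrib)
  also have "(\<Sum>e\<in>{e\<in>E. i \<in> e}. if e \<in> W then \<delta> else 0) = (\<Sum>e\<in>{e\<in>E. i \<in> e \<and> e \<in> W}. \<delta>)"
    using assms by (simp add: sum.inter_filter[symmetric] conj_assoc)
  finally show ?thesis by (simp add: working_degree_def)
qed

lemma working_degree_pos_iff:
  "finite E \<Longrightarrow> 0 < working_degree E W i \<longleftrightarrow> (\<exists>e\<in>E. i \<in> e \<and> e \<in> W)"
  by (auto simp: working_degree_def card_gt_0_iff)

context
  fixes V :: "'v set" and E :: "'v set set" and cV :: "'v \<Rightarrow> real" and cE :: "'v set \<Rightarrow> real"
    and \<mu> :: "'v set \<Rightarrow> real" and W :: "'v set set"
  assumes fin: "finite V" "finite E"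
    and feas: "feasible V E cV cE \<mu>"
    and W: "W \<subseteq> E"
begin

lemma feasible_raise_iff:
  assumes "0 \<le> \<delta>"
  shows "feasible V E cV cE (raise \<mu> W \<delta>) \<longleftrightarrow> (\<forall>b\<in>step_bounds V E cV cE W \<mu>. \<delta> \<le> b)"
proof -
  have edges: "(\<forall>e\<in>E. 0 \<le> raise \<mu> W \<delta> e \<and> raise \<mu> W \<delta> e \<le> cE e) \<longleftrightarrow> (\<forall>e\<in>W. \<delta> \<le> cE e - \<mu> e)"
    using assms feas W by (auto simp: feasible_def raise_def)
  have vertex: "vload E (raise \<mu> W \<delta>) i \<le> cV i \<longleftrightarrow>
      (0 < working_degree E W i \<longrightarrow> \<delta> \<le> (cV i - vload E \<mu> i) / working_degree E W i)"
    if "i \<in> V" for i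
    using that feas fin by (auto simp: vload_raise feasible_def pos_le_divide_eq algebra_simps)
  show ?thesis
    unfolding feasible_def step_bounds_def using edges vertex by auto
qed

lemma step_bounds_nonneg: "b \<in> step_bounds V E cV cE W \<mu> \<Longrightarrow> 0 \<le> b"
  using feas W by (auto simp: step_bounds_def feasible_def)

lemma finite_step_bounds: "finite (step_bounds V E cV cE W \<mu>)"
  using fin W by (simp add: step_bounds_def finite_subset)

lemma step_bounds_nonempty: "W \<noteq> {} \<Longrightarrow> step_bounds V E cV cE W \<mu> \<noteq> {}"
  by (simp add: step_bounds_def)

lemma rt_delta_eq_Min:
  assumes "W \<noteq> {}"
  shows "rt_delta V E cV cE W \<mu> = Min (step_bounds V E cV cE W \<mu>)"
  unfolding rt_delta_def
  using finite_step_bounds step_bounds_nonempty[OF assms] step_bounds_nonneg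
  by (intro Greatest_equality) (auto simp: feasible_raise_iff)

lemma rt_delta_in_step_bounds: "W \<noteq> {} \<Longrightarrow> rt_delta V E cV cE W \<mu> \<in> step_bounds V E cV cE W \<mu>"
  using rt_delta_eq_Min finite_step_bounds step_bounds_nonempty by simp

lemma rt_delta_nonneg: "W \<noteq> {} \<Longrightarrow> 0 \<le> rt_delta V E cV cE W \<mu>"
  using rt_delta_in_step_bounds step_bounds_nonneg by blast

lemma feasible_raise_rt_delta:
  assumes "W \<noteq> {}"
  shows "feasible V E cV cE (raise \<mu> W (rt_delta V E cV cE W \<mu>))"
  using feasible_raise_iff[OF rt_delta_nonneg[OF assms]] rt_delta_eq_Min[OF assms] finite_step_bounds
  by simp

lemma rt_delta_saturates:
  assumes "W \<noteq> {}"
  defines "\<mu>' \<equiv> raise \<mu> W (rt_delta V E cV cE W \<mu>)"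
  shows "\<exists>e\<in>W. esat cE \<mu>' e \<or> (\<exists>i\<in>e. vsat E cV \<mu>' i)"
proof -
  define \<delta> where "\<delta> = rt_delta V E cV cE W \<mu>"
  consider e where "e \<in> W" "\<delta> = cE e - \<mu> e"
    | i where "0 < working_degree E W i" "\<delta> = (cV i - vload E \<mu> i) / working_degree E W i"
    using rt_delta_in_step_bounds[OF assms(1)] unfolding \<delta>_def step_bounds_def by auto
  then show ?thesis
  proof cases
    case 1
    then have "esat cE \<mu>' e"
      by (simp add: \<mu>'_def \<delta>_def[symmetric] esat_def raise_def)
    with 1 show ?thesis by blast
  next
    case 2
    then have "vsat E cV \<mu>' i"
      using fin by (simp add: \<mu>'_def \<delta>_def[symmetric] vsat_def vload_raise)
    moreover obtain e where "e \<in> W" "i \<in> e"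
      using 2 fin by (auto simp: working_degree_pos_iff)
    ultimately show ?thesis by blast
  qed
qed

lemma rt_delta_pos:
  assumes "W \<noteq> {}"
    and unsat: "\<forall>e\<in>W. \<mu> e < cE e \<and> (\<forall>i\<in>e. vload E \<mu> i < cV i)"
  shows "0 < rt_delta V E cV cE W \<mu>"
proof -
  define \<delta> where "\<delta> = rt_delta V E cV cE W \<mu>"
  consider e where "e \<in> W" "\<delta> = cE e - \<mu> e"
    | i where "0 < working_degree E W i" "\<delta> = (cV i - vload E \<mu> i) / working_degree E W i"
    using rt_delta_in_step_bounds[OF assms(1)] unfolding \<delta>_def step_bounds_def by auto
  then show ?thesis
  proof cases
    case 1
    with unsat show ?thesis by (auto simp: \<delta>_def)
  next
    case 2
    then obtain e where "e \<in> W" "i \<in> e"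
      using fin by (auto simp: working_degree_pos_iff)
    with 2 unsat show ?thesis by (auto simp: \<delta>_def)
  qed
qed

end

locale rising_tide_run =
  fixes V :: "'v set" and E :: "'v set set" and cV :: "'v \<Rightarrow> real" and cE :: "'v set \<Rightarrow> real"
  assumes cgraph: "is_cgraph V E cV cE"
begin

lemma finite_V: "finite V"
  using cgraph by (simp add: is_cgraph_def)

lemma edge_subset_V: "e \<in> E \<Longrightarrow> e \<subseteq> V"
  using cgraph by (simp add: is_cgraph_def)

lemma finite_E: "finite E"
  using finite_V edge_subset_V by (meson Pow_iff finite_Pow_iff finite_subset subsetI)

abbreviation W :: "nat \<Rightarrow> 'v set set" where
  "W k \<equiv> rt_work V E cV cE k"

abbreviation mu :: "nat \<Rightarrow> 'v set \<Rightarrow> real" where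
  "mu k \<equiv> rt_mu V E cV cE k"

abbreviation delta :: "nat \<Rightarrow> real" where
  "delta k \<equiv> rt_delta V E cV cE (W k) (mu k)"

lemma W_0: "W 0 = {e\<in>E. 0 < cE e}"
  by (simp add: rt_work_def rt_state_def)

lemma mu_0: "mu 0 = (\<lambda>_. 0)"
  by (simp add: rt_mu_def rt_state_def)

lemma rt_state_Suc: "rt_state V E cV cE (Suc k) = rt_step V E cV cE (rt_state V E cV cE k)"
  by (simp add: rt_state_def)

lemma
  assumes "W k \<noteq> {}"
  shows mu_Suc: "mu (Suc k) = raise (mu k) (W k) (delta k)"
    and W_Suc: "W (Suc k) =
      {e\<in>W k. \<not> (\<exists>i\<in>e. vsat E cV (mu (Suc k)) i) \<and> \<not> esat cE (mu (Suc k)) e}"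
  using assms unfolding rt_work_def rt_mu_def rt_state_Suc rt_step_def
  by (cases "rt_state V E cV cE k"; simp add: Let_def)+

lemma
  assumes "W k = {}"
  shows mu_Suc_idle: "mu (Suc k) = mu k"
    and W_Suc_idle: "W (Suc k) = {}"
  using assms unfolding rt_work_def rt_mu_def rt_state_Suc rt_step_def
  by (cases "rt_state V E cV cE k"; simp)+

lemma W_Suc_subset: "W (Suc k) \<subseteq> W k"
  by (cases "W k = {}") (auto simp: W_Suc_idle W_Suc)

lemma W_antimono: "k \<le> k' \<Longrightarrow> W k' \<subseteq> W k"
  by (induction k' rule: dec_induct) (use W_Suc_subset in blast)+

lemma mu_Suc_not_working: "e \<notin> W k \<Longrightarrow> mu (Suc k) e = mu k e"
  by (cases "W k = {}") (auto simp: mu_Suc_idle mu_Suc raise_def)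

lemma run_invariant:
  "feasible V E cV cE (mu k) \<and> W k \<subseteq> E \<and> (\<forall>e\<in>W k. \<forall>e'. mu k e' \<le> mu k e)"
proof (induction k)
  case 0
  have "feasible V E cV cE (\<lambda>_. 0)"
    using cgraph by (simp add: feasible_def is_cgraph_def vload_def)
  then show ?case by (auto simp: W_0 mu_0)
next
  case (Suc k)
  show ?case
  proof (cases "W k = {}")
    case True
    with Suc show ?thesis by (simp add: W_Suc_idle mu_Suc_idle)
  next
    case False
    have "0 \<le> delta k"
      using rt_delta_nonneg[OF finite_V finite_E _ _ False] Suc by blast
    moreover have "feasible V E cV cE (mu (Suc k))"
      using feasible_raise_rt_delta[OF finite_V finite_E _ _ False] Suc by (simp add: mu_Suc[OF False])
    moreover have "mu (Suc k) e' \<le> mu (Suc k) e" if "e \<in> W (Suc k)" for e e'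
    proof -
      have "e \<in> W k"
        using that W_Suc_subset by blast
      moreover have "mu k e' \<le> mu k e"
        using Suc \<open>e \<in> W k\<close> by blast
      ultimately show ?thesis
        using \<open>0 \<le> delta k\<close> by (auto simp: mu_Suc[OF False] raise_def)
    qed
    ultimately show ?thesis
      using Suc W_Suc_subset by blast
  qed
qed

lemma feasible_mu: "feasible V E cV cE (mu k)"
  using run_invariant by blast

lemma W_subset_E: "W k \<subseteq> E"
  using run_invariant by blast

lemma mu_le_working: "e \<in> W k \<Longrightarrow> mu k e' \<le> mu k e"
  using run_invariant by blast

lemma delta_nonneg: "W k \<noteq> {} \<Longrightarrow> 0 \<le> delta k"
  using rt_delta_nonneg[OF finite_V finite_E feasible_mu W_subset_E] .

lemma mu_Suc_le_working:
  assumes e: "e \<in> W k"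
  shows "mu (Suc k) e' \<le> mu (Suc k) e"
proof -
  have ne: "W k \<noteq> {}"
    using e by blast
  show ?thesis
    using mu_le_working[OF e, of e'] delta_nonneg[OF ne] e by (auto simp: mu_Suc[OF ne] raise_def)
qed

lemma mu_Suc_mono: "mu k e \<le> mu (Suc k) e"
  by (cases "W k = {}") (simp_all add: mu_Suc_idle mu_Suc raise_def delta_nonneg)

lemma mu_mono: "k \<le> k' \<Longrightarrow> mu k e \<le> mu k' e"
  using lift_Suc_mono_le[of "\<lambda>t. mu t e"] mu_Suc_mono by blast

lemma mu_frozen:
  assumes "e \<notin> W k" and "k \<le> k'"
  shows "mu k' e = mu k e"
  using assms(2)
proof (induction k' rule: dec_induct)
  case (step k')
  then show ?case
    using assms(1) W_antimono[of k k'] mu_Suc_not_working[of e k'] by auto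
qed simp

lemma vsat_mono:
  assumes "i \<in> V" and "vsat E cV (mu t) i" and "t \<le> t'"
  shows "vsat E cV (mu t') i"
proof -
  have "vload E (mu t) i \<le> vload E (mu t') i"
    unfolding vload_def using mu_mono[OF \<open>t \<le> t'\<close>] by (rule sum_mono)
  moreover have "vload E (mu t') i \<le> cV i"
    using feasible_mu[of t'] \<open>i \<in> V\<close> by (simp add: feasible_def)
  ultimately show ?thesis
    using assms(2) by (simp add: vsat_def)
qed

lemma working_unsaturated:
  assumes "e \<in> W (Suc k)"
  shows "\<not> esat cE (mu (Suc k)) e" and "i \<in> e \<Longrightarrow> \<not> vsat E cV (mu (Suc k)) i"
proof -
  have "W k \<noteq> {}"
    using assms W_Suc_subset by blast
  with assms show "\<not> esat cE (mu (Suc k)) e" and "i \<in> e \<Longrightarrow> \<not> vsat E cV (mu (Suc k)) i"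
    by (auto simp: W_Suc)
qed

lemma delta_Suc_pos:
  assumes ne: "W (Suc k) \<noteq> {}"
  shows "0 < delta (Suc k)"
proof (rule rt_delta_pos[OF finite_V finite_E feasible_mu W_subset_E ne])
  show "\<forall>e\<in>W (Suc k). mu (Suc k) e < cE e \<and> (\<forall>i\<in>e. vload E (mu (Suc k)) i < cV i)"
  proof (intro ballI conjI)
    fix e assume e: "e \<in> W (Suc k)"
    then have "e \<in> E"
      using W_subset_E by blast
    then have "mu (Suc k) e \<le> cE e"
      using feasible_mu[of "Suc k"] by (simp add: feasible_def)
    with working_unsaturated(1)[OF e] show "mu (Suc k) e < cE e"
      by (simp add: esat_def)
    fix i assume "i \<in> e"
    then have "vload E (mu (Suc k)) i \<le> cV i"
      using feasible_mu[of "Suc k"] edge_subset_V[OF \<open>e \<in> E\<close>] by (auto simp: feasible_def)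
    with working_unsaturated(2)[OF e \<open>i \<in> e\<close>] show "vload E (mu (Suc k)) i < cV i"
      by (simp add: vsat_def)
  qed
qed

lemma W_Suc_psubset:
  assumes ne: "W k \<noteq> {}"
  shows "W (Suc k) \<subset> W k"
proof -
  obtain e where "e \<in> W k" and "esat cE (mu (Suc k)) e \<or> (\<exists>i\<in>e. vsat E cV (mu (Suc k)) i)"
    using rt_delta_saturates[OF finite_V finite_E feasible_mu[of k] W_subset_E[of k] ne]
    by (auto simp: mu_Suc[OF ne])
  then have "e \<notin> W (Suc k)"
    by (auto simp: W_Suc[OF ne])
  with \<open>e \<in> W k\<close> W_Suc_subset show ?thesis by blast
qed

lemma card_W_bound: "W k \<noteq> {} \<Longrightarrow> card (W k) + k \<le> card (W 0)"
proof (induction k)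
  case (Suc k)
  then have "W k \<noteq> {}"
    using W_Suc_subset by blast
  then have "card (W (Suc k)) < card (W k)"
    using W_Suc_psubset finite_subset[OF W_subset_E finite_E] by (simp add: psubset_card_mono)
  with Suc \<open>W k \<noteq> {}\<close> show ?case by simp
qed simp

lemma halts: "\<exists>k. W k = {}"
proof
  have "finite (W (card (W 0)))"
    using W_subset_E finite_E by (rule finite_subset)
  with card_W_bound[of "card (W 0)"] show "W (card (W 0)) = {}"
    by (cases "W (card (W 0)) = {}") simp_all
qed

definition halting_time :: nat where
  "halting_time = (LEAST k. W k = {})"

lemma W_halting_time: "W halting_time = {}"
  unfolding halting_time_def by (rule LeastI_ex[OF halts])

lemma rising_tide_eq: "rising_tide V E cV cE = mu halting_time"
  by (simp add: rising_tide_def halting_time_def)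

lemma mu_after_halting: "halting_time \<le> t \<Longrightarrow> mu t = mu halting_time"
proof (induction t rule: dec_induct)
  case (step t)
  then show ?case
    using W_antimono[of halting_time t] W_halting_time by (simp add: mu_Suc_idle)
qed simp

lemma rising_tide_eq_frozen:
  assumes "e \<notin> W k"
  shows "rising_tide V E cV cE e = mu k e"
proof (cases "k \<le> halting_time")
  case True
  then show ?thesis
    unfolding rising_tide_eq by (rule mu_frozen[OF assms])
next
  case False
  then have "mu k = mu halting_time"
    by (intro mu_after_halting) simp
  then show ?thesis
    by (simp only: rising_tide_eq)
qed

lemma rising_tide_removed_at:
  "removed_at V E cV cE e k \<Longrightarrow> rising_tide V E cV cE e = mu (Suc k) e"
  unfolding removed_at_def by (blast intro: rising_tide_eq_frozen)

lemma mu_Suc_working: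
  assumes "e \<in> W k"
  shows "mu (Suc k) e = mu k e + delta k"
proof -
  have "W k \<noteq> {}"
    using assms by blast
  with assms show ?thesis
    by (simp add: mu_Suc raise_def)
qed

lemma rising_tide_removed_earlier_less:
  assumes r1: "removed_at V E cV cE e1 k1" and r2: "removed_at V E cV cE e2 k2" and "k1 < k2"
  shows "rising_tide V E cV cE e1 < rising_tide V E cV cE e2"
proof -
  have e2: "e2 \<in> W k2"
    using r2 by (simp add: removed_at_def)
  then have "e2 \<in> W (Suc k1)"
    using W_antimono[of "Suc k1" k2] \<open>k1 < k2\<close> by auto
  obtain j where j: "k2 = Suc j"
    using \<open>k1 < k2\<close> less_imp_Suc_add by blast
  have "rising_tide V E cV cE e1 = mu (Suc k1) e1"
    using r1 by (rule rising_tide_removed_at)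
  also have "\<dots> \<le> mu (Suc k1) e2"
    using \<open>e2 \<in> W (Suc k1)\<close> by (rule mu_le_working)
  also have "\<dots> \<le> mu k2 e2"
    using \<open>k1 < k2\<close> by (simp add: mu_mono)
  also have "\<dots> < mu (Suc k2) e2"
    using mu_Suc_working[OF e2] delta_Suc_pos[of j] e2 j by auto
  also have "\<dots> = rising_tide V E cV cE e2"
    using r2 by (rule rising_tide_removed_at[symmetric])
  finally show ?thesis .
qed

lemma dep_graph_edge: "(a, b) \<in> dep_graph V E cV cE \<Longrightarrow> {a, b} \<in> E"
  by (auto simp: dep_graph_def insert_commute)

lemma rising_tide_le_dep_edge:
  assumes "(u, v) \<in> dep_graph V E cV cE" and "{v, w} \<in> E"
  shows "rising_tide V E cV cE {v, w} \<le> rising_tide V E cV cE {u, v}"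
proof -
  obtain k where r: "removed_at V E cV cE {v, u} k" and sat: "vsat E cV (mu (Suc k)) v"
    using assms(1) by (auto simp: dep_graph_def)
  have "{v, u} \<in> W k"
    using r by (simp add: removed_at_def)
  then have "W k \<noteq> {}"
    by blast
  then have "{v, w} \<notin> W (Suc k)"
    using sat by (auto simp: W_Suc)
  then have "rising_tide V E cV cE {v, w} = mu (Suc k) {v, w}"
    by (rule rising_tide_eq_frozen)
  also have "\<dots> \<le> mu (Suc k) {v, u}"
    using \<open>{v, u} \<in> W k\<close> by (rule mu_Suc_le_working)
  also have "\<dots> = rising_tide V E cV cE {u, v}"
    using rising_tide_removed_at[OF r] by (simp add: insert_commute)
  finally show ?thesis .
qed

lemma rising_tide_dep_in_edges_eq:
  assumes "(a, u) \<in> dep_graph V E cV cE" and "(b, u) \<in> dep_graph V E cV cE"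
  shows "rising_tide V E cV cE {a, u} = rising_tide V E cV cE {b, u}"
proof -
  have "{u, a} \<in> E" and "{u, b} \<in> E"
    using assms by (auto dest: dep_graph_edge simp: insert_commute)
  then have "rising_tide V E cV cE {u, b} \<le> rising_tide V E cV cE {a, u}"
    and "rising_tide V E cV cE {u, a} \<le> rising_tide V E cV cE {b, u}"
    using assms rising_tide_le_dep_edge by blast+
  then show ?thesis
    by (simp add: insert_commute)
qed

lemma rising_tide_dep_walk_antimono:
  assumes walk: "\<forall>i<n. (x i, x (Suc i)) \<in> dep_graph V E cV cE" and "i \<le> j" and "j < n"
  shows "rising_tide V E cV cE {x j, x (Suc j)} \<le> rising_tide V E cV cE {x i, x (Suc i)}"
  using \<open>i \<le> j\<close> \<open>j < n\<close>
proof (induction j rule: dec_induct)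
  case (step j)
  then have "(x j, x (Suc j)) \<in> dep_graph V E cV cE"
    and "{x (Suc j), x (Suc (Suc j))} \<in> E"
    using walk dep_graph_edge by auto
  then have "rising_tide V E cV cE {x (Suc j), x (Suc (Suc j))} \<le> rising_tide V E cV cE {x j, x (Suc j)}"
    by (rule rising_tide_le_dep_edge)
  with step show ?case
    by simp
qed simp

text \<open>The junk value for vertices that are never saturated exceeds every actual saturation time.\<close>

definition sat_time :: "'v \<Rightarrow> nat" where
  "sat_time x = (if \<exists>t. vsat E cV (mu t) x then LEAST t. vsat E cV (mu t) x else Suc halting_time)"

lemma sat_time_le: "vsat E cV (mu t) x \<Longrightarrow> sat_time x \<le> t"
  by (auto simp: sat_time_def intro: Least_le)

lemma vsat_at_sat_time: "vsat E cV (mu t) x \<Longrightarrow> vsat E cV (mu (sat_time x)) x"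
  unfolding sat_time_def by (auto intro: LeastI)

lemma sat_time_le_halting_time:
  assumes "vsat E cV (mu t) x"
  shows "sat_time x \<le> halting_time"
proof -
  have "vsat E cV (mu (min t halting_time)) x"
  proof (cases "t \<le> halting_time")
    case False
    then have "mu t = mu halting_time"
      by (intro mu_after_halting) simp
    with assms False show ?thesis
      by (simp add: min_def)
  qed (use assms in \<open>simp add: min_def\<close>)
  then show ?thesis
    using sat_time_le[of "min t halting_time" x] by simp
qed

lemma becomes_sat_at_sat_time:
  assumes "vsat E cV (mu t) x"
  shows "becomes_sat V E cV cE x (sat_time x)"
proof -
  have "\<not> vsat E cV (mu (sat_time x - 1)) x" if "sat_time x \<noteq> 0"
    using that sat_time_le[of "sat_time x - 1" x] by fastforce
  then show ?thesis
    using vsat_at_sat_time[OF assms] by (auto simp: becomes_sat_def)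
qed

lemma delta_eq_0_if_vsat:
  assumes "e \<in> W k" and "i \<in> e" and "vsat E cV (mu k) i"
  shows "delta k = 0"
proof -
  have ne: "W k \<noteq> {}" and "e \<in> E"
    using assms(1) W_subset_E by auto
  have "0 < working_degree E (W k) i"
    using assms \<open>e \<in> E\<close> finite_E by (auto simp: working_degree_pos_iff)
  moreover have "vload E (mu (Suc k)) i \<le> cV i"
    using feasible_mu[of "Suc k"] edge_subset_V[OF \<open>e \<in> E\<close>] assms(2) by (auto simp: feasible_def)
  ultimately have "delta k \<le> 0"
    using assms(3) finite_E by (simp add: mu_Suc[OF ne] vload_raise vsat_def mult_le_0_iff)
  with delta_nonneg[OF ne] show ?thesis
    by simp
qed

lemma dep_graph_sat_time_less:
  assumes nosim: "no_simultaneous_saturation V E cV cE"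
    and uv: "(u, v) \<in> dep_graph V E cV cE" and "u \<noteq> v"
  shows "sat_time v < sat_time u"
proof (rule ccontr)
  assume "\<not> sat_time v < sat_time u"
  then have le: "sat_time u \<le> sat_time v" by simp
  have "u \<in> V" and "v \<in> V"
    using uv by (auto simp: dep_graph_def)
  obtain k where r: "removed_at V E cV cE {v, u} k" and sat_v: "vsat E cV (mu (Suc k)) v"
    using uv by (auto simp: dep_graph_def)
  have work: "{v, u} \<in> W k"
    using r by (simp add: removed_at_def)
  then have ne: "W k \<noteq> {}"
    by blast
  have "\<exists>t. vsat E cV (mu t) u"
  proof (rule ccontr)
    assume "\<not> (\<exists>t. vsat E cV (mu t) u)"
    then have "sat_time u = Suc halting_time"
      by (simp add: sat_time_def)
    with le sat_time_le_halting_time[OF sat_v] show False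
      by simp
  qed
  then obtain t where sat_u: "vsat E cV (mu t) u" ..
  have "sat_time u \<noteq> sat_time v"
    using nosim becomes_sat_at_sat_time[OF sat_u] becomes_sat_at_sat_time[OF sat_v]
      \<open>u \<in> V\<close> \<open>v \<in> V\<close> \<open>u \<noteq> v\<close>
    unfolding no_simultaneous_saturation_def by metis
  with le sat_time_le[OF sat_v] have "sat_time u \<le> k"
    by simp
  then have "vsat E cV (mu k) u"
    using vsat_mono[OF \<open>u \<in> V\<close> vsat_at_sat_time[OF sat_u]] by blast
  then have "k = 0"
    using work working_unsaturated(2)[of "{v, u}"] by (cases k) auto
  have "mu (Suc k) = mu k"
    using delta_eq_0_if_vsat[OF work _ \<open>vsat E cV (mu k) u\<close>] by (simp add: mu_Suc[OF ne] raise_def)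
  with sat_v \<open>k = 0\<close> have "sat_time v = 0"
    using sat_time_le[of 0 v] by simp
  with le \<open>sat_time u \<noteq> sat_time v\<close> show False
    by simp
qed

lemma acyclic_dep_graph:
  assumes "no_simultaneous_saturation V E cV cE"
  shows "acyclic (dep_graph V E cV cE - Id)"
proof -
  have "(dep_graph V E cV cE - Id)\<inverse> \<subseteq> measure sat_time"
  proof
    fix p assume "p \<in> (dep_graph V E cV cE - Id)\<inverse>"
    then obtain u v where "p = (v, u)" and "(u, v) \<in> dep_graph V E cV cE" and "u \<noteq> v"
      by auto
    then show "p \<in> measure sat_time"
      using dep_graph_sat_time_less[OF assms] by simp
  qed
  then have "wf ((dep_graph V E cV cE - Id)\<inverse>)"
    using wf_measure by (rule wf_subset[rotated])
  then have "acyclic ((dep_graph V E cV cE - Id)\<inverse>)"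
    by (rule wf_acyclic)
  then show ?thesis
    by (simp only: acyclic_converse)
qed

end

theorem lemma20:
  fixes V :: "'v set" and E :: "'v set set" and cV :: "'v \<Rightarrow> real" and cE :: "'v set \<Rightarrow> real"
  assumes G: "is_cgraph V E cV cE"
    and nosim: "no_simultaneous_saturation V E cV cE"
  defines "\<mu> \<equiv> rising_tide V E cV cE"
    and "D \<equiv> dep_graph V E cV cE"
  shows
    "(\<forall>e1\<in>E. \<forall>e2\<in>E. \<forall>k1 k2. removed_at V E cV cE e1 k1 \<and> removed_at V E cV cE e2 k2 \<and> k1 < k2
        \<longrightarrow> \<mu> e1 < \<mu> e2)
   \<and> (\<forall>u\<in>V. \<forall>a b. (a, u) \<in> D \<and> (b, u) \<in> D \<longrightarrow> \<mu> {a, u} = \<mu> {b, u})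
   \<and> (\<forall>u v w. (u, v) \<in> D \<and> {v, w} \<in> E \<longrightarrow> \<mu> {v, w} \<le> \<mu> {u, v})
   \<and> (\<forall>(x :: nat \<Rightarrow> 'v) n. (\<forall>i<n. (x i, x (Suc i)) \<in> D) \<longrightarrow>
        (\<forall>i j. i \<le> j \<and> j < n \<longrightarrow> \<mu> {x j, x (Suc j)} \<le> \<mu> {x i, x (Suc i)}))
   \<and> acyclic (D - Id)"
proof -
  interpret rising_tide_run V E cV cE
    using G by (rule rising_tide_run.intro)
  show ?thesis
    unfolding \<mu>_def D_def
    using rising_tide_removed_earlier_less rising_tide_dep_in_edges_eq rising_tide_le_dep_edge
      rising_tide_dep_walk_antimono acyclic_dep_graph[OF nosim]
    by blast
qed

end
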